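(* Let $(\mathcal{A},\mathcal{E})$ be a finite, essentially small exact category. For a nonzero object $X$ define $\mu_\mathcal{E}(X)=\max\{\mu_\mathcal{E}(X') : X'\text{ indecomposable},\ X'\subset_\mathcal{E}X\}$ (maximum in $(\mathfrak{S}(\mathbb{N}),\lll)$); this agrees with $\mu_\mathcal{E}$ on indecomposable objects. Then this extended map is a measure on the poset of isomorphism classes of nonzero objects ordered by $\subset_\mathcal{E}$, i.e. $X\subset_\mathcal{E}Y$ implies $\mu_\mathcal{E}(X)\lll\mu_\mathcal{E}(Y)$.
   Context: $(\mathcal{A},\mathcal{E})$ is a Quillen exact category; admissible monics are morphisms $i$ with $(i,d)\in\mathcal{E}$ for some $d$. $X\subset_\mathcal{E}Y$ means there is an admissible monic $X\to Y$; $X\subsetneq_\mathcal{E}Y$ means there is one that is not an isomorphism. The $\mathcal{E}$-length $l_\mathcal{E}(X)$ is the supremum of all $n$ such that there is a chain $0=X_0\to\cdots\to X_n=X$ of admissible monics none of which is an isomorphism; $(\mathcal{A},\mathcal{E})$ is finite if $l_\mathcal{E}(X)<\infty$ for all $X$; in that case $\subset_\mathcal{E}$ is a partial order on isomorphism classes. $\mathfrak{S}(\mathbb{N})$ is the set of finite nonempty sequences of natural numbers, totally ordered by: $x\lll y$ iff $x=y$, or $x$ is a proper prefix of $y$, or at the first index $i$ where $x_i\neq y_i$ (both defined) one has $x_i>y_i$. For indecomposable $X$, $\mu_\mathcal{E}(X)$ is the $\lll$-maximum of $(l_\mathcal{E}(X_1),\dots,l_\mathcal{E}(X_n))$ over all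 chains $X_1\subsetneq_\mathcal{E}\cdots\subsetneq_\mathcal{E}X_n=X$ ($n\ge1$) with all $X_i$ indecomposable. A measure is an order-preserving map from a poset to a totally ordered set. *)

theory Defs
  imports Main "HOL-Library.Extended_Nat"
begin

text \<open>An (essentially small) category is given by a set of objects and a set of morphisms
  with source, target, composition and identities; the additive structure is given by
  addition of parallel morphisms and zero morphisms; the exact structure is a set of
  composable pairs (i, d) of morphisms (the conflations / kernel-cokernel pairs).\<close>

record ('o, 'm) excat =
  ob    :: "'o set"
  mor   :: "'m set"
  src   :: "'m \<Rightarrow> 'o"
  tgt   :: "'m \<Rightarrow> 'o"
  cmp   :: "'m \<Rightarrow> 'm \<Rightarrow> 'm"     (* cmp C g f = g o f *)
  idt   :: "'o \<Rightarrow> 'm"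
  madd  :: "'m \<Rightarrow> 'm \<Rightarrow> 'm"
  mzero :: "'o \<Rightarrow> 'o \<Rightarrow> 'm"
  ex    :: "('m \<times> 'm) set"

definition hom :: "('o, 'm, 'x) excat_scheme \<Rightarrow> 'o \<Rightarrow> 'o \<Rightarrow> 'm set" where
  "hom C X Y = {f \<in> mor C. src C f = X \<and> tgt C f = Y}"

definition is_category :: "('o, 'm, 'x) excat_scheme \<Rightarrow> bool" where
  "is_category C \<longleftrightarrow>
     (\<forall>f \<in> mor C. src C f \<in> ob C \<and> tgt C f \<in> ob C) \<and>
     (\<forall>X \<in> ob C. idt C X \<in> hom C X X) \<and>
     (\<forall>X \<in> ob C. \<forall>Y \<in> ob C. \<forall>Z \<in> ob C. \<forall>f \<in> hom C X Y. \<forall>g \<in> hom C Y Z.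
        cmp C g f \<in> hom C X Z) \<and>
     (\<forall>W \<in> ob C. \<forall>X \<in> ob C. \<forall>Y \<in> ob C. \<forall>Z \<in> ob C.
        \<forall>f \<in> hom C W X. \<forall>g \<in> hom C X Y. \<forall>h \<in> hom C Y Z.
        cmp C h (cmp C g f) = cmp C (cmp C h g) f) \<and>
     (\<forall>X \<in> ob C. \<forall>Y \<in> ob C. \<forall>f \<in> hom C X Y.
        cmp C f (idt C X) = f \<and> cmp C (idt C Y) f = f)"

definition is_preadditive :: "('o, 'm, 'x) excat_scheme \<Rightarrow> bool" where
  "is_preadditive C \<longleftrightarrow> is_category C \<and>
     (\<forall>X \<in> ob C. \<forall>Y \<in> ob C.
        mzero C X Y \<in> hom C X Y \<and>
        (\<forall>f \<in> hom C X Y. \<forall>g \<in> hom C X Y. madd C f g \<in> hom C X Y) \<and>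
        (\<forall>f \<in> hom C X Y. \<forall>g \<in> hom C X Y. \<forall>h \<in> hom C X Y.
           madd C (madd C f g) h = madd C f (madd C g h)) \<and>
        (\<forall>f \<in> hom C X Y. \<forall>g \<in> hom C X Y. madd C f g = madd C g f) \<and>
        (\<forall>f \<in> hom C X Y. madd C f (mzero C X Y) = f) \<and>
        (\<forall>f \<in> hom C X Y. \<exists>g \<in> hom C X Y. madd C f g = mzero C X Y)) \<and>
     (\<forall>X \<in> ob C. \<forall>Y \<in> ob C. \<forall>Z \<in> ob C.
        (\<forall>f \<in> hom C X Y. \<forall>f' \<in> hom C X Y. \<forall>g \<in> hom C Y Z.
           cmp C g (madd C f f') = madd C (cmp C g f) (cmp C g f')) \<and>
        (\<forall>f \<in> hom C X Y. \<forall>g \<in> hom C Y Z. \<forall>g' \<in> hom C Y Z.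
           cmp C (madd C g g') f = madd C (cmp C g f) (cmp C g' f)))"

definition is_zero_obj :: "('o, 'm, 'x) excat_scheme \<Rightarrow> 'o \<Rightarrow> bool" where
  "is_zero_obj C Z \<longleftrightarrow> Z \<in> ob C \<and>
     (\<forall>X \<in> ob C. (\<exists>!f. f \<in> hom C Z X) \<and> (\<exists>!f. f \<in> hom C X Z))"

definition is_biproduct ::
  "('o, 'm, 'x) excat_scheme \<Rightarrow> 'o \<Rightarrow> 'o \<Rightarrow> 'o \<Rightarrow> 'm \<Rightarrow> 'm \<Rightarrow> 'm \<Rightarrow> 'm \<Rightarrow> bool" where
  "is_biproduct C A B S i1 i2 p1 p2 \<longleftrightarrow>
     A \<in> ob C \<and> B \<in> ob C \<and> S \<in> ob C \<and>
     i1 \<in> hom C A S \<and> i2 \<in> hom C B S \<and> p1 \<in> hom C S A \<and> p2 \<in> hom C S B \<and>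
     cmp C p1 i1 = idt C A \<and> cmp C p2 i2 = idt C B \<and>
     cmp C p1 i2 = mzero C B A \<and> cmp C p2 i1 = mzero C A B \<and>
     madd C (cmp C i1 p1) (cmp C i2 p2) = idt C S"

definition is_additive :: "('o, 'm, 'x) excat_scheme \<Rightarrow> bool" where
  "is_additive C \<longleftrightarrow> is_preadditive C \<and>
     (\<exists>Z. is_zero_obj C Z) \<and>
     (\<forall>A \<in> ob C. \<forall>B \<in> ob C. \<exists>S i1 i2 p1 p2. is_biproduct C A B S i1 i2 p1 p2)"

definition is_iso :: "('o, 'm, 'x) excat_scheme \<Rightarrow> 'm \<Rightarrow> bool" where
  "is_iso C f \<longleftrightarrow> f \<in> mor C \<and>
     (\<exists>g \<in> hom C (tgt C f) (src C f).
        cmp C g f = idt C (src C f) \<and> cmp C f g = idt C (tgt C f))"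

definition is_kernel :: "('o, 'm, 'x) excat_scheme \<Rightarrow> 'm \<Rightarrow> 'm \<Rightarrow> bool" where
  "is_kernel C i d \<longleftrightarrow> i \<in> mor C \<and> d \<in> mor C \<and> tgt C i = src C d \<and>
     cmp C d i = mzero C (src C i) (tgt C d) \<and>
     (\<forall>T \<in> ob C. \<forall>f \<in> hom C T (src C d). cmp C d f = mzero C T (tgt C d) \<longrightarrow>
        (\<exists>!g. g \<in> hom C T (src C i) \<and> cmp C i g = f))"

definition is_cokernel :: "('o, 'm, 'x) excat_scheme \<Rightarrow> 'm \<Rightarrow> 'm \<Rightarrow> bool" where
  "is_cokernel C d i \<longleftrightarrow> i \<in> mor C \<and> d \<in> mor C \<and> tgt C i = src C d \<and>
     cmp C d i = mzero C (src C i) (tgt C d) \<and>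
     (\<forall>T \<in> ob C. \<forall>f \<in> hom C (tgt C i) T. cmp C f i = mzero C (src C i) T \<longrightarrow>
        (\<exists>!g. g \<in> hom C (tgt C d) T \<and> cmp C g d = f))"

definition is_kernel_cokernel_pair :: "('o, 'm, 'x) excat_scheme \<Rightarrow> 'm \<Rightarrow> 'm \<Rightarrow> bool" where
  "is_kernel_cokernel_pair C i d \<longleftrightarrow> is_kernel C i d \<and> is_cokernel C d i"

definition pairs_iso :: "('o, 'm, 'x) excat_scheme \<Rightarrow> 'm \<times> 'm \<Rightarrow> 'm \<times> 'm \<Rightarrow> bool" where
  "pairs_iso C p q \<longleftrightarrow> (case p of (i, d) \<Rightarrow> case q of (i', d') \<Rightarrow>
     (\<exists>a b c. is_iso C a \<and> is_iso C b \<and> is_iso C c \<and>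
        a \<in> hom C (src C i) (src C i') \<and> b \<in> hom C (tgt C i) (tgt C i') \<and>
        c \<in> hom C (tgt C d) (tgt C d') \<and>
        cmp C b i = cmp C i' a \<and> cmp C c d = cmp C d' b))"

definition adm_mono :: "('o, 'm, 'x) excat_scheme \<Rightarrow> 'm \<Rightarrow> bool" where
  "adm_mono C i \<longleftrightarrow> (\<exists>d. (i, d) \<in> ex C)"

definition adm_epi :: "('o, 'm, 'x) excat_scheme \<Rightarrow> 'm \<Rightarrow> bool" where
  "adm_epi C d \<longleftrightarrow> (\<exists>i. (i, d) \<in> ex C)"

definition is_pushout :: "('o, 'm, 'x) excat_scheme \<Rightarrow> 'm \<Rightarrow> 'm \<Rightarrow> 'm \<Rightarrow> 'm \<Rightarrow> bool" where
  "is_pushout C i f i' f' \<longleftrightarrow>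
     i \<in> mor C \<and> f \<in> mor C \<and> i' \<in> mor C \<and> f' \<in> mor C \<and>
     src C f = src C i \<and> src C i' = tgt C f \<and> src C f' = tgt C i \<and> tgt C i' = tgt C f' \<and>
     cmp C f' i = cmp C i' f \<and>
     (\<forall>T \<in> ob C. \<forall>g \<in> hom C (tgt C f) T. \<forall>h \<in> hom C (tgt C i) T.
        cmp C h i = cmp C g f \<longrightarrow>
        (\<exists>!u. u \<in> hom C (tgt C i') T \<and> cmp C u i' = g \<and> cmp C u f' = h))"

definition is_pullback :: "('o, 'm, 'x) excat_scheme \<Rightarrow> 'm \<Rightarrow> 'm \<Rightarrow> 'm \<Rightarrow> 'm \<Rightarrow> bool" where
  "is_pullback C d f d' f' \<longleftrightarrow>
     d \<in> mor C \<and> f \<in> mor C \<and> d' \<in> mor C \<and> f' \<in> mor C \<and>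
     tgt C f = tgt C d \<and> tgt C d' = src C f \<and> tgt C f' = src C d \<and> src C d' = src C f' \<and>
     cmp C d f' = cmp C f d' \<and>
     (\<forall>T \<in> ob C. \<forall>g \<in> hom C T (src C f). \<forall>h \<in> hom C T (src C d).
        cmp C d h = cmp C f g \<longrightarrow>
        (\<exists>!u. u \<in> hom C T (src C d') \<and> cmp C d' u = g \<and> cmp C f' u = h))"

text \<open>Quillen exact category (axioms as in Buehler, "Exact categories", Def. 2.1).\<close>
definition exact_category :: "('o, 'm, 'x) excat_scheme \<Rightarrow> bool" where
  "exact_category C \<longleftrightarrow> is_additive C \<and>
     (\<forall>(i, d) \<in> ex C. is_kernel_cokernel_pair C i d) \<and>
     (\<forall>p \<in> ex C. \<forall>i d. is_kernel_cokernel_pair C i d \<and> pairs_iso C p (i, d) \<longrightarrow> (i, d) \<in> ex C) \<and>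
     (\<forall>X \<in> ob C. adm_mono C (idt C X)) \<and>
     (\<forall>X \<in> ob C. adm_epi C (idt C X)) \<and>
     (\<forall>i j. adm_mono C i \<and> adm_mono C j \<and> tgt C i = src C j \<longrightarrow> adm_mono C (cmp C j i)) \<and>
     (\<forall>d e. adm_epi C d \<and> adm_epi C e \<and> tgt C d = src C e \<longrightarrow> adm_epi C (cmp C e d)) \<and>
     (\<forall>i f. adm_mono C i \<and> f \<in> mor C \<and> src C f = src C i \<longrightarrow>
        (\<exists>i' f'. is_pushout C i f i' f' \<and> adm_mono C i')) \<and>
     (\<forall>d f. adm_epi C d \<and> f \<in> mor C \<and> tgt C f = tgt C d \<longrightarrow>
        (\<exists>d' f'. is_pullback C d f d' f' \<and> adm_epi C d'))"

definition adm_sub :: "('o, 'm, 'x) excat_scheme \<Rightarrow> 'o \<Rightarrow> 'o \<Rightarrow> bool" where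
  "adm_sub C X Y \<longleftrightarrow> (\<exists>i \<in> hom C X Y. adm_mono C i)"

definition adm_psub :: "('o, 'm, 'x) excat_scheme \<Rightarrow> 'o \<Rightarrow> 'o \<Rightarrow> bool" where
  "adm_psub C X Y \<longleftrightarrow> (\<exists>i \<in> hom C X Y. adm_mono C i \<and> \<not> is_iso C i)"

text \<open>A chain 0 = X_0 \<rightarrow> ... \<rightarrow> X_n = X of non-isomorphic admissible monics, as the list
  [X_0, ..., X_n] (of length n+1).\<close>
definition length_chain :: "('o, 'm, 'x) excat_scheme \<Rightarrow> 'o \<Rightarrow> 'o list \<Rightarrow> bool" where
  "length_chain C X xs \<longleftrightarrow> xs \<noteq> [] \<and> set xs \<subseteq> ob C \<and>
     is_zero_obj C (hd xs) \<and> last xs = X \<and>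
     (\<forall>k. Suc k < length xs \<longrightarrow> adm_psub C (xs ! k) (xs ! Suc k))"

definition E_length :: "('o, 'm, 'x) excat_scheme \<Rightarrow> 'o \<Rightarrow> enat" where
  "E_length C X = (SUP xs \<in> {xs. length_chain C X xs}. enat (length xs - 1))"

definition finite_exact :: "('o, 'm, 'x) excat_scheme \<Rightarrow> bool" where
  "finite_exact C \<longleftrightarrow> (\<forall>X \<in> ob C. E_length C X < \<infinity>)"

definition indecomposable :: "('o, 'm, 'x) excat_scheme \<Rightarrow> 'o \<Rightarrow> bool" where
  "indecomposable C X \<longleftrightarrow> X \<in> ob C \<and> \<not> is_zero_obj C X \<and>
     (\<forall>A B i1 i2 p1 p2. is_biproduct C A B X i1 i2 p1 p2 \<longrightarrow>
        is_zero_obj C A \<or> is_zero_obj C B)"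

definition lll :: "nat list \<Rightarrow> nat list \<Rightarrow> bool" where
  "lll x y \<longleftrightarrow> x = y \<or> (\<exists>z. z \<noteq> [] \<and> y = x @ z) \<or>
     (\<exists>i < min (length x) (length y). take i x = take i y \<and> x ! i > y ! i)"

definition lll_max :: "nat list set \<Rightarrow> nat list" where
  "lll_max S = (THE s. s \<in> S \<and> (\<forall>t \<in> S. lll t s))"

definition mu_ind :: "('o, 'm, 'x) excat_scheme \<Rightarrow> 'o \<Rightarrow> nat list" where
  "mu_ind C X = lll_max
     {map (\<lambda>Y. the_enat (E_length C Y)) xs | xs.
        xs \<noteq> [] \<and> last xs = X \<and> (\<forall>Y \<in> set xs. indecomposable C Y) \<and>
        (\<forall>k. Suc k < length xs \<longrightarrow> adm_psub C (xs ! k) (xs ! Suc k))}"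

definition mu_ext :: "('o, 'm, 'x) excat_scheme \<Rightarrow> 'o \<Rightarrow> nat list" where
  "mu_ext C X = lll_max {mu_ind C X' | X'. indecomposable C X' \<and> adm_sub C X' X}"

end

theory Submission
  imports Defs "HOL-Library.List_Lexorder"
begin

text \<open>Along a chain \<open>X\<^sub>1 \<subset> \<dots> \<subset> X\<^sub>n\<close> of indecomposables the lengths strictly increase
  up to \<open>l(X\<^sub>n)\<close>, so the candidate sequences for \<open>mu_ind X\<close> form a finite set and the maxima
  defining \<open>mu_ind\<close> and \<open>mu_ext\<close> exist. A chain ending in \<open>X' \<subseteq> X\<close> extends to one ending in
  \<open>X\<close> (append \<open>X\<close>, or replace \<open>X'\<close> by \<open>X\<close> when the inclusion is an isomorphism) whose
  length sequence has the old one as a prefix. Hence \<open>mu_ind\<close> is monotone on indecomposables,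
  which gives \<open>mu_ext = mu_ind\<close> there, and \<open>mu_ext X\<close> is the maximum over a set growing with
  \<open>X\<close>; the set is nonempty for \<open>X \<noteq> 0\<close> since an admissible subobject of minimal length
  among the nonzero ones is indecomposable.\<close>

section \<open>The order \<open>lll\<close> on sequences\<close>

text \<open>\<open>lll\<close> is the lexicographic order after reversing the order of the entries.\<close>

definition negate_entries :: "nat list \<Rightarrow> int list" where
  "negate_entries x = map (\<lambda>n. - int n) x"

lemma inj_negate_entries: "inj negate_entries"
  unfolding negate_entries_def by (rule inj_mapI) (auto simp: inj_def)

lemma take_negate_entries_eq_iff:
  "take i (negate_entries x) = take i (negate_entries y) \<longleftrightarrow> take i x = take i y"
  using inj_negate_entries unfolding negate_entries_def inj_def by (metis take_map)

lemma nth_negate_entries: "i < length x \<Longrightarrow> negate_entries x ! i = - int (x ! i)"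
  by (simp add: negate_entries_def)

lemma lll_iff_lex: "lll x y \<longleftrightarrow> negate_entries x \<le> negate_entries y"
proof -
  have prefix: "(\<exists>z. z \<noteq> [] \<and> y = x @ z) \<longleftrightarrow> length x < length y \<and> take (length x) y = x"
    by (metis append_eq_conv_conj append_self_conv length_append less_add_same_cancel1
         length_greater_0_conv linorder_not_less take_all_iff)
  have len: "length (negate_entries x) = length x" "length (negate_entries y) = length y"
    by (auto simp: negate_entries_def)
  have "take (length x) (negate_entries y) = negate_entries x \<longleftrightarrow> take (length x) y = x"
    using take_negate_entries_eq_iff[of "length x" x y] by (auto simp: negate_entries_def take_map)
  then show ?thesis
    unfolding lll_def list_le_def list_less_def lexord_take_index_conv len prefix
    using take_negate_entries_eq_iff
    by (auto simp: inj_eq[OF inj_negate_entries] nth_negate_entries)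
qed

lemma lll_refl: "lll x x"
  by (simp add: lll_def)

lemma lll_trans: "lll x y \<Longrightarrow> lll y z \<Longrightarrow> lll x z"
  by (simp add: lll_iff_lex)

lemma lll_antisym: "lll x y \<Longrightarrow> lll y x \<Longrightarrow> x = y"
  by (simp add: lll_iff_lex inj_eq[OF inj_negate_entries])

lemma lll_append: "lll x (x @ [n])"
  by (simp add: lll_def)

lemma lll_max_eqI: "s \<in> S \<Longrightarrow> \<forall>t\<in>S. lll t s \<Longrightarrow> lll_max S = s"
  unfolding lll_max_def by (rule the_equality) (auto intro: lll_antisym)

lemma lll_max_greatest:
  assumes "finite S" "S \<noteq> {}"
  shows "lll_max S \<in> S" "\<forall>t\<in>S. lll t (lll_max S)"
proof -
  have "Max (negate_entries ` S) \<in> negate_entries ` S"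
    using assms by simp
  then obtain s where s: "s \<in> S" "negate_entries s = Max (negate_entries ` S)"
    by auto
  then have "\<forall>t\<in>S. lll t s"
    using assms by (simp add: lll_iff_lex)
  with s show "lll_max S \<in> S" "\<forall>t\<in>S. lll t (lll_max S)"
    using lll_max_eqI by auto
qed

lemma lll_max_mono:
  assumes "finite T" "S \<noteq> {}" "S \<subseteq> T"
  shows "lll (lll_max S) (lll_max T)"
  using lll_max_greatest[of S] lll_max_greatest[of T] assms finite_subset by blast

section \<open>Additive categories\<close>

locale exact_cat =
  fixes C :: "('o, 'm) excat"
  assumes exact: "exact_category C"
begin

lemma preadditive: "is_preadditive C"
  using exact by (simp add: exact_category_def is_additive_def)

lemma category: "is_category C"
  using preadditive by (simp add: is_preadditive_def)

lemma in_hom_iff: "f \<in> hom C X Y \<longleftrightarrow> f \<in> mor C \<and> src C f = X \<and> tgt C f = Y"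
  by (simp add: hom_def)

lemma hom_ob: "f \<in> hom C X Y \<Longrightarrow> X \<in> ob C \<and> Y \<in> ob C"
  using category unfolding is_category_def in_hom_iff by auto

lemma id_in_hom: "X \<in> ob C \<Longrightarrow> idt C X \<in> hom C X X"
  using category unfolding is_category_def by auto

lemma comp_in_hom: "f \<in> hom C X Y \<Longrightarrow> g \<in> hom C Y Z \<Longrightarrow> cmp C g f \<in> hom C X Z"
  using category hom_ob unfolding is_category_def by blast

lemma comp_assoc:
  "f \<in> hom C W X \<Longrightarrow> g \<in> hom C X Y \<Longrightarrow> h \<in> hom C Y Z \<Longrightarrow>
   cmp C h (cmp C g f) = cmp C (cmp C h g) f"
  using category hom_ob unfolding is_category_def by blast

lemma comp_id_left: "f \<in> hom C X Y \<Longrightarrow> cmp C (idt C Y) f = f"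
  using category hom_ob unfolding is_category_def by blast

lemma comp_id_right: "f \<in> hom C X Y \<Longrightarrow> cmp C f (idt C X) = f"
  using category hom_ob unfolding is_category_def by blast

lemma zero_in_hom: "X \<in> ob C \<Longrightarrow> Y \<in> ob C \<Longrightarrow> mzero C X Y \<in> hom C X Y"
  using preadditive unfolding is_preadditive_def by blast

lemma add_in_hom: "f \<in> hom C X Y \<Longrightarrow> g \<in> hom C X Y \<Longrightarrow> madd C f g \<in> hom C X Y"
  using preadditive hom_ob unfolding is_preadditive_def by blast

lemma add_assoc:
  "f \<in> hom C X Y \<Longrightarrow> g \<in> hom C X Y \<Longrightarrow> h \<in> hom C X Y \<Longrightarrow>
   madd C (madd C f g) h = madd C f (madd C g h)"
  using preadditive hom_ob unfolding is_preadditive_def by blast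

lemma add_commute: "f \<in> hom C X Y \<Longrightarrow> g \<in> hom C X Y \<Longrightarrow> madd C f g = madd C g f"
  using preadditive hom_ob unfolding is_preadditive_def by blast

lemma add_zero_right: "f \<in> hom C X Y \<Longrightarrow> madd C f (mzero C X Y) = f"
  using preadditive hom_ob unfolding is_preadditive_def by blast

lemma add_zero_left: "f \<in> hom C X Y \<Longrightarrow> madd C (mzero C X Y) f = f"
  using add_commute add_zero_right zero_in_hom hom_ob by metis

lemma add_inverse_ex: "f \<in> hom C X Y \<Longrightarrow> \<exists>g \<in> hom C X Y. madd C f g = mzero C X Y"
  using preadditive hom_ob unfolding is_preadditive_def by blast

lemma comp_add_distrib_left:
  "f \<in> hom C X Y \<Longrightarrow> f' \<in> hom C X Y \<Longrightarrow> g \<in> hom C Y Z \<Longrightarrow>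
   cmp C g (madd C f f') = madd C (cmp C g f) (cmp C g f')"
  using preadditive hom_ob unfolding is_preadditive_def by blast

lemma comp_add_distrib_right:
  "f \<in> hom C X Y \<Longrightarrow> g \<in> hom C Y Z \<Longrightarrow> g' \<in> hom C Y Z \<Longrightarrow>
   cmp C (madd C g g') f = madd C (cmp C g f) (cmp C g' f)"
  using preadditive hom_ob unfolding is_preadditive_def by blast

lemma add_idem_eq_zero:
  assumes a: "a \<in> hom C X Y" and idem: "madd C a a = a"
  shows "a = mzero C X Y"
proof -
  obtain b where b: "b \<in> hom C X Y" "madd C a b = mzero C X Y"
    using add_inverse_ex[OF a] by blast
  have "a = madd C a (madd C a b)" using b add_zero_right a by simp
  also have "\<dots> = madd C (madd C a a) b" using add_assoc a b by simp
  also have "\<dots> = mzero C X Y" using idem b by simp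
  finally show ?thesis .
qed

lemma zero_comp:
  assumes f: "f \<in> hom C X Y" and Z: "Z \<in> ob C"
  shows "cmp C (mzero C Y Z) f = mzero C X Z"
proof -
  have z: "mzero C Y Z \<in> hom C Y Z" using zero_in_hom hom_ob f Z by simp
  have "cmp C (mzero C Y Z) f = cmp C (madd C (mzero C Y Z) (mzero C Y Z)) f"
    using add_zero_right z by simp
  also have "\<dots> = madd C (cmp C (mzero C Y Z) f) (cmp C (mzero C Y Z) f)"
    using comp_add_distrib_right f z by simp
  finally show ?thesis using add_idem_eq_zero comp_in_hom f z by metis
qed

lemma comp_zero:
  assumes g: "g \<in> hom C Y Z" and X: "X \<in> ob C"
  shows "cmp C g (mzero C X Y) = mzero C X Z"
proof -
  have z: "mzero C X Y \<in> hom C X Y" using zero_in_hom hom_ob g X by simp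
  have "cmp C g (mzero C X Y) = cmp C g (madd C (mzero C X Y) (mzero C X Y))"
    using add_zero_right z by simp
  also have "\<dots> = madd C (cmp C g (mzero C X Y)) (cmp C g (mzero C X Y))"
    using comp_add_distrib_left g z by simp
  finally show ?thesis using add_idem_eq_zero comp_in_hom g z by metis
qed

lemma zero_obj_ob: "is_zero_obj C Z \<Longrightarrow> Z \<in> ob C"
  by (simp add: is_zero_obj_def)

lemma zero_obj_hom_from_unique:
  "is_zero_obj C Z \<Longrightarrow> f \<in> hom C Z X \<Longrightarrow> g \<in> hom C Z X \<Longrightarrow> f = g"
  unfolding is_zero_obj_def using hom_ob by blast

lemma zero_objI:
  assumes X: "X \<in> ob C" and id_zero: "idt C X = mzero C X X"
  shows "is_zero_obj C X"
  unfolding is_zero_obj_def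
proof (intro conjI ballI X)
  fix T assume T: "T \<in> ob C"
  show "\<exists>!f. f \<in> hom C X T"
  proof
    show "mzero C X T \<in> hom C X T" using zero_in_hom X T by simp
    fix f assume f: "f \<in> hom C X T"
    then have "f = cmp C f (idt C X)" using comp_id_right by simp
    then show "f = mzero C X T" using id_zero comp_zero f X by simp
  qed
  show "\<exists>!f. f \<in> hom C T X"
  proof
    show "mzero C T X \<in> hom C T X" using zero_in_hom X T by simp
    fix f assume f: "f \<in> hom C T X"
    then have "f = cmp C (idt C X) f" using comp_id_left by simp
    then show "f = mzero C T X" using id_zero zero_comp f X by simp
  qed
qed

lemma zero_obj_id: "is_zero_obj C Z \<Longrightarrow> idt C Z = mzero C Z Z"
  using zero_obj_hom_from_unique id_in_hom zero_in_hom zero_obj_ob by metis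

lemma isoE:
  assumes "is_iso C f" "f \<in> hom C X Y"
  obtains g where "g \<in> hom C Y X" "cmp C g f = idt C X" "cmp C f g = idt C Y"
  using assms unfolding is_iso_def by (auto simp: in_hom_iff)

lemma isoI:
  "f \<in> hom C X Y \<Longrightarrow> g \<in> hom C Y X \<Longrightarrow> cmp C g f = idt C X \<Longrightarrow> cmp C f g = idt C Y \<Longrightarrow>
   is_iso C f"
  unfolding is_iso_def by (auto simp: in_hom_iff)

lemma iso_id: "X \<in> ob C \<Longrightarrow> is_iso C (idt C X)"
  using isoI id_in_hom comp_id_left by metis

lemma zero_obj_iso:
  assumes K: "is_zero_obj C K" and i: "i \<in> hom C K A" and iso: "is_iso C i"
  shows "is_zero_obj C A"
proof -
  obtain g where g: "g \<in> hom C A K" "cmp C i g = idt C A"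
    using isoE[OF iso i] by blast
  have ob: "A \<in> ob C" "K \<in> ob C" using hom_ob i by auto
  have "idt C A = cmp C i (cmp C (idt C K) g)" using g comp_id_left by simp
  also have "\<dots> = mzero C A A"
    using zero_obj_id[OF K] zero_comp[OF g(1)] comp_zero[OF i] ob by simp
  finally show ?thesis using zero_objI ob by simp
qed

lemma iso_cancel_left:
  assumes i: "i \<in> hom C A B" "is_iso C i" and j: "j \<in> hom C Z A"
    and ij: "is_iso C (cmp C i j)"
  shows "is_iso C j"
proof -
  obtain p where p: "p \<in> hom C B A" "cmp C p i = idt C A"
    using isoE[OF i(2,1)] by blast
  obtain h where h: "h \<in> hom C B Z" "cmp C h (cmp C i j) = idt C Z" "cmp C (cmp C i j) h = idt C B"
    using isoE[OF ij comp_in_hom[OF j i(1)]] by blast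
  have j_inv: "cmp C (cmp C h i) j = idt C Z"
    using comp_assoc[OF j i(1) h(1)] h by simp
  have jh: "cmp C j h \<in> hom C B A" using comp_in_hom j h by simp
  have "cmp C j (cmp C h i) = cmp C (cmp C p (cmp C i (cmp C j h))) i"
    using comp_assoc[OF i(1) h(1) j] comp_assoc[OF jh i(1) p(1)] p comp_id_left[OF jh] by simp
  also have "\<dots> = idt C A"
    using comp_assoc[OF h(1) j i(1)] h comp_id_right[OF p(1)] p by simp
  finally show ?thesis using isoI[OF j comp_in_hom[OF i(1) h(1)] j_inv] by simp
qed

lemma biproductD:
  assumes "is_biproduct C A B S i1 i2 p1 p2"
  shows "A \<in> ob C" "B \<in> ob C" "S \<in> ob C" "i1 \<in> hom C A S" "i2 \<in> hom C B S"
    "p1 \<in> hom C S A" "p2 \<in> hom C S B"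
    "cmp C p1 i1 = idt C A" "cmp C p2 i2 = idt C B"
    "cmp C p1 i2 = mzero C B A" "cmp C p2 i1 = mzero C A B"
    "madd C (cmp C i1 p1) (cmp C i2 p2) = idt C S"
  using assms unfolding is_biproduct_def by auto

lemma biproduct_inj1_not_iso:
  assumes bp: "is_biproduct C A B S i1 i2 p1 p2" and B: "\<not> is_zero_obj C B"
  shows "\<not> is_iso C i1"
proof
  assume iso: "is_iso C i1"
  note b = biproductD[OF bp]
  obtain g where g: "g \<in> hom C S A" "cmp C i1 g = idt C S"
    using isoE[OF iso b(4)] by blast
  have "p1 = cmp C (cmp C p1 i1) g"
    using comp_assoc[OF g(1) b(4) b(6)] g comp_id_right[OF b(6)] by simp
  then have p1: "cmp C i1 p1 = idt C S" using b(8) comp_id_left g by simp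
  have "i2 = cmp C i1 (cmp C p1 i2)" using comp_assoc[OF b(5) b(6) b(4)] p1 comp_id_left b(5) by simp
  then have "i2 = mzero C B S" using b comp_zero by simp
  then have "idt C B = mzero C B B" using b comp_zero by metis
  then show False using zero_objI b B by simp
qed

lemma biproduct_copair_comp_inj:
  assumes bp: "is_biproduct C A B S i1 i2 p1 p2" and g: "g \<in> hom C A T" and h: "h \<in> hom C B T"
  shows "cmp C (madd C (cmp C g p1) (cmp C h p2)) i1 = g"
    "cmp C (madd C (cmp C g p1) (cmp C h p2)) i2 = h"
proof -
  note b = biproductD[OF bp]
  have gp: "cmp C g p1 \<in> hom C S T" and hp: "cmp C h p2 \<in> hom C S T"
    using comp_in_hom b g h by auto
  show "cmp C (madd C (cmp C g p1) (cmp C h p2)) i1 = g"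
    using comp_add_distrib_right[OF b(4) gp hp] comp_assoc[OF b(4) b(6) g] comp_assoc[OF b(4) b(7) h]
      b comp_id_right[OF g] comp_zero[OF h] add_zero_right[OF g] by simp
  show "cmp C (madd C (cmp C g p1) (cmp C h p2)) i2 = h"
    using comp_add_distrib_right[OF b(5) gp hp] comp_assoc[OF b(5) b(6) g] comp_assoc[OF b(5) b(7) h]
      b comp_id_right[OF h] comp_zero[OF g] add_zero_left[OF h] by simp
qed

lemma comp_biproduct_copair:
  assumes bp: "is_biproduct C A B S i1 i2 p1 p2"
    and g: "g \<in> hom C A T" and h: "h \<in> hom C B T" and f: "f \<in> hom C T U"
  shows "cmp C f (madd C (cmp C g p1) (cmp C h p2)) = madd C (cmp C (cmp C f g) p1) (cmp C (cmp C f h) p2)"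
proof -
  note b = biproductD[OF bp]
  show ?thesis
    using comp_add_distrib_left[OF comp_in_hom[OF b(6) g] comp_in_hom[OF b(7) h] f]
      comp_assoc[OF b(6) g f] comp_assoc[OF b(7) h f] by simp
qed

end

section \<open>Admissible monics\<close>

context exact_cat
begin

lemma conflation_kernel_cokernel: "(i, d) \<in> ex C \<Longrightarrow> is_kernel C i d \<and> is_cokernel C d i"
  using exact unfolding exact_category_def is_kernel_cokernel_pair_def by blast

lemma conflation_iso_closed:
  "p \<in> ex C \<Longrightarrow> is_kernel C i d \<Longrightarrow> is_cokernel C d i \<Longrightarrow> pairs_iso C p (i, d) \<Longrightarrow> (i, d) \<in> ex C"
  using exact unfolding exact_category_def is_kernel_cokernel_pair_def by blast

lemma adm_mono_id: "X \<in> ob C \<Longrightarrow> adm_mono C (idt C X)"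
  using exact unfolding exact_category_def by blast

lemma adm_epi_id: "X \<in> ob C \<Longrightarrow> adm_epi C (idt C X)"
  using exact unfolding exact_category_def by blast

lemma adm_mono_comp:
  assumes "adm_mono C i" "adm_mono C j" "i \<in> hom C X Y" "j \<in> hom C Y Z"
  shows "adm_mono C (cmp C j i)"
proof -
  have "tgt C i = src C j" using assms(3,4) by (simp add: in_hom_iff)
  then show ?thesis using exact assms(1,2) unfolding exact_category_def by blast
qed

lemma adm_mono_pushout_ex:
  assumes "adm_mono C i" "f \<in> hom C (src C i) X"
  shows "\<exists>i' f'. is_pushout C i f i' f' \<and> adm_mono C i'"
proof -
  have "f \<in> mor C" "src C f = src C i" using assms(2) by (simp_all add: in_hom_iff)
  then show ?thesis using exact assms(1) unfolding exact_category_def by blast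
qed

lemma pushoutE:
  assumes po: "is_pushout C i f i' f'" and i: "i \<in> hom C A B" and f: "f \<in> hom C A A'"
  obtains P where "i' \<in> hom C A' P" "f' \<in> hom C B P" "cmp C f' i = cmp C i' f"
    "\<And>T g h. T \<in> ob C \<Longrightarrow> g \<in> hom C A' T \<Longrightarrow> h \<in> hom C B T \<Longrightarrow> cmp C h i = cmp C g f \<Longrightarrow>
       \<exists>!u. u \<in> hom C P T \<and> cmp C u i' = g \<and> cmp C u f' = h"
proof
  show "i' \<in> hom C A' (tgt C i')" "f' \<in> hom C B (tgt C i')" "cmp C f' i = cmp C i' f"
    using po i f unfolding is_pushout_def in_hom_iff by auto
  have "tgt C f = A'" "tgt C i = B" using i f by (auto simp: in_hom_iff)
  then show "\<And>T g h. T \<in> ob C \<Longrightarrow> g \<in> hom C A' T \<Longrightarrow> h \<in> hom C B T \<Longrightarrow>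
      cmp C h i = cmp C g f \<Longrightarrow> \<exists>!u. u \<in> hom C (tgt C i') T \<and> cmp C u i' = g \<and> cmp C u f' = h"
    using po unfolding is_pushout_def by blast
qed

lemma kernel_factor:
  assumes "is_kernel C i d" "i \<in> hom C A X" "d \<in> hom C X Q"
    "T \<in> ob C" "f \<in> hom C T X" "cmp C d f = mzero C T Q"
  shows "\<exists>!g. g \<in> hom C T A \<and> cmp C i g = f"
proof -
  have "src C i = A" "src C d = X" "tgt C d = Q" using assms(2,3) by (auto simp: in_hom_iff)
  then show ?thesis using assms(1,4-) unfolding is_kernel_def by blast
qed

lemma cokernel_factor:
  assumes "is_cokernel C d i" "i \<in> hom C A X" "d \<in> hom C X Q"
    "T \<in> ob C" "f \<in> hom C X T" "cmp C f i = mzero C A T"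
  shows "\<exists>!g. g \<in> hom C Q T \<and> cmp C g d = f"
proof -
  have "src C i = A" "tgt C i = X" "tgt C d = Q" using assms(2,3) by (auto simp: in_hom_iff)
  then show ?thesis using assms(1,4-) unfolding is_cokernel_def by blast
qed

lemma kernel_comp_iso:
  assumes ker: "is_kernel C j e" and j: "j \<in> hom C A X" and e: "e \<in> hom C X Q"
    and \<phi>: "\<phi> \<in> hom C X Y" and \<psi>: "\<psi> \<in> hom C Y X"
    and \<psi>\<phi>: "cmp C \<psi> \<phi> = idt C X" and \<phi>\<psi>: "cmp C \<phi> \<psi> = idt C Y"
  shows "is_kernel C (cmp C \<phi> j) (cmp C e \<psi>)"
  unfolding is_kernel_def
proof (intro conjI ballI impI)
  have j': "cmp C \<phi> j \<in> hom C A Y" and e': "cmp C e \<psi> \<in> hom C Y Q"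
    using comp_in_hom j e \<phi> \<psi> by auto
  then show "cmp C \<phi> j \<in> mor C" "cmp C e \<psi> \<in> mor C" "tgt C (cmp C \<phi> j) = src C (cmp C e \<psi>)"
    by (auto simp: in_hom_iff)
  have \<psi>j': "cmp C \<psi> (cmp C \<phi> j) = j"
    using comp_assoc[OF j \<phi> \<psi>] \<psi>\<phi> comp_id_left j by simp
  have ej: "cmp C e j = mzero C A Q" using ker j e unfolding is_kernel_def in_hom_iff by auto
  show "cmp C (cmp C e \<psi>) (cmp C \<phi> j) = mzero C (src C (cmp C \<phi> j)) (tgt C (cmp C e \<psi>))"
    using comp_assoc[OF j' \<psi> e] \<psi>j' ej j' e' by (simp add: in_hom_iff)
  fix T f assume T: "T \<in> ob C" and f: "f \<in> hom C T (src C (cmp C e \<psi>))"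
    and f0: "cmp C (cmp C e \<psi>) f = mzero C T (tgt C (cmp C e \<psi>))"
  have f: "f \<in> hom C T Y" using f e' by (auto simp: in_hom_iff)
  have "cmp C e (cmp C \<psi> f) = mzero C T Q"
    using comp_assoc[OF f \<psi> e] f0 e' by (simp add: in_hom_iff)
  then obtain g where g: "g \<in> hom C T A" "cmp C j g = cmp C \<psi> f"
    and g_unique: "\<And>g'. g' \<in> hom C T A \<Longrightarrow> cmp C j g' = cmp C \<psi> f \<Longrightarrow> g' = g"
    using kernel_factor[OF ker j e T comp_in_hom[OF f \<psi>]] by metis
  show "\<exists>!g. g \<in> hom C T (src C (cmp C \<phi> j)) \<and> cmp C (cmp C \<phi> j) g = f"
  proof
    have "cmp C (cmp C \<phi> j) g = f"
      using comp_assoc[OF g(1) j \<phi>] g comp_assoc[OF f \<psi> \<phi>] \<phi>\<psi> comp_id_left f by simp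
    then show "g \<in> hom C T (src C (cmp C \<phi> j)) \<and> cmp C (cmp C \<phi> j) g = f"
      using g j' by (simp add: in_hom_iff)
    fix g' assume g': "g' \<in> hom C T (src C (cmp C \<phi> j)) \<and> cmp C (cmp C \<phi> j) g' = f"
    then have "g' \<in> hom C T A" using j' by (auto simp: in_hom_iff)
    then show "g' = g"
      using g_unique[of g'] comp_assoc[OF \<open>g' \<in> hom C T A\<close> j' \<psi>] \<psi>j' g' by simp
  qed
qed

lemma cokernel_comp_iso:
  assumes coker: "is_cokernel C e j" and j: "j \<in> hom C A X" and e: "e \<in> hom C X Q"
    and \<phi>: "\<phi> \<in> hom C X Y" and \<psi>: "\<psi> \<in> hom C Y X"
    and \<psi>\<phi>: "cmp C \<psi> \<phi> = idt C X" and \<phi>\<psi>: "cmp C \<phi> \<psi> = idt C Y"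
  shows "is_cokernel C (cmp C e \<psi>) (cmp C \<phi> j)"
  unfolding is_cokernel_def
proof (intro conjI ballI impI)
  have j': "cmp C \<phi> j \<in> hom C A Y" and e': "cmp C e \<psi> \<in> hom C Y Q"
    using comp_in_hom j e \<phi> \<psi> by auto
  then show "cmp C \<phi> j \<in> mor C" "cmp C e \<psi> \<in> mor C" "tgt C (cmp C \<phi> j) = src C (cmp C e \<psi>)"
    by (auto simp: in_hom_iff)
  have e'\<phi>: "cmp C (cmp C e \<psi>) \<phi> = e"
    using comp_assoc[OF \<phi> \<psi> e] \<psi>\<phi> comp_id_right e by simp
  have ej: "cmp C e j = mzero C A Q" using coker j e unfolding is_cokernel_def in_hom_iff by auto
  show "cmp C (cmp C e \<psi>) (cmp C \<phi> j) = mzero C (src C (cmp C \<phi> j)) (tgt C (cmp C e \<psi>))"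
    using comp_assoc[OF j \<phi> e'] e'\<phi> ej j' e' by (simp add: in_hom_iff)
  fix T f assume T: "T \<in> ob C" and f: "f \<in> hom C (tgt C (cmp C \<phi> j)) T"
    and f0: "cmp C f (cmp C \<phi> j) = mzero C (src C (cmp C \<phi> j)) T"
  have f: "f \<in> hom C Y T" using f j' by (auto simp: in_hom_iff)
  have "cmp C (cmp C f \<phi>) j = mzero C A T"
    using comp_assoc[OF j \<phi> f] f0 j' by (simp add: in_hom_iff)
  then obtain h where h: "h \<in> hom C Q T" "cmp C h e = cmp C f \<phi>"
    and h_unique: "\<And>h'. h' \<in> hom C Q T \<Longrightarrow> cmp C h' e = cmp C f \<phi> \<Longrightarrow> h' = h"
    using cokernel_factor[OF coker j e T comp_in_hom[OF \<phi> f]] by metis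
  show "\<exists>!h. h \<in> hom C (tgt C (cmp C e \<psi>)) T \<and> cmp C h (cmp C e \<psi>) = f"
  proof
    have "cmp C h (cmp C e \<psi>) = f"
      using comp_assoc[OF \<psi> e h(1)] h comp_assoc[OF \<psi> \<phi> f] \<phi>\<psi> comp_id_right f by simp
    then show "h \<in> hom C (tgt C (cmp C e \<psi>)) T \<and> cmp C h (cmp C e \<psi>) = f"
      using h e' by (simp add: in_hom_iff)
    fix h' assume h': "h' \<in> hom C (tgt C (cmp C e \<psi>)) T \<and> cmp C h' (cmp C e \<psi>) = f"
    then have "h' \<in> hom C Q T" using e' by (auto simp: in_hom_iff)
    then show "h' = h"
      using h_unique comp_assoc[OF \<phi> e' \<open>h' \<in> hom C Q T\<close>] e'\<phi> h' by simp
  qed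
qed

lemma adm_mono_comp_iso:
  assumes adm: "adm_mono C j" and j: "j \<in> hom C A X" and \<phi>: "\<phi> \<in> hom C X Y" "is_iso C \<phi>"
  shows "adm_mono C (cmp C \<phi> j)"
proof -
  obtain e where je: "(j, e) \<in> ex C" using adm unfolding adm_mono_def by blast
  note kc = conflation_kernel_cokernel[OF je]
  define Q where "Q = tgt C e"
  have e: "e \<in> hom C X Q"
    using kc j unfolding is_kernel_def Q_def in_hom_iff by auto
  obtain \<psi> where \<psi>: "\<psi> \<in> hom C Y X" "cmp C \<psi> \<phi> = idt C X" "cmp C \<phi> \<psi> = idt C Y"
    using isoE[OF \<phi>(2,1)] by blast
  have ob: "A \<in> ob C" "Q \<in> ob C" using hom_ob j e by auto
  have e\<psi>\<phi>: "cmp C (cmp C e \<psi>) \<phi> = e"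
    using comp_assoc[OF \<phi>(1) \<psi>(1) e] \<psi> comp_id_right e by simp
  have ends: "src C j = A" "tgt C j = X" "tgt C e = Q"
    "src C (cmp C \<phi> j) = A" "tgt C (cmp C \<phi> j) = Y" "tgt C (cmp C e \<psi>) = Q"
    using j e comp_in_hom[OF j \<phi>(1)] comp_in_hom[OF \<psi>(1) e] by (auto simp: in_hom_iff)
  have "pairs_iso C (j, e) (cmp C \<phi> j, cmp C e \<psi>)"
    unfolding pairs_iso_def prod.case ends
  proof (intro exI conjI)
    show "is_iso C (idt C A)" "is_iso C \<phi>" "is_iso C (idt C Q)"
      using iso_id ob \<phi> by auto
    show "idt C A \<in> hom C A A" "\<phi> \<in> hom C X Y" "idt C Q \<in> hom C Q Q"
      using id_in_hom ob \<phi> by auto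
    show "cmp C \<phi> j = cmp C (cmp C \<phi> j) (idt C A)"
      using comp_id_right[OF comp_in_hom[OF j \<phi>(1)]] by (rule sym)
    show "cmp C (idt C Q) e = cmp C (cmp C e \<psi>) \<phi>"
      using comp_id_left[OF e] e\<psi>\<phi> by (rule trans[OF _ sym])
  qed
  moreover have "is_kernel C (cmp C \<phi> j) (cmp C e \<psi>)"
    using kernel_comp_iso[OF _ j e \<phi>(1) \<psi>] kc by blast
  moreover have "is_cokernel C (cmp C e \<psi>) (cmp C \<phi> j)"
    using cokernel_comp_iso[OF _ j e \<phi>(1) \<psi>] kc by blast
  ultimately have "(cmp C \<phi> j, cmp C e \<psi>) \<in> ex C"
    using conflation_iso_closed[OF je] by blast
  then show ?thesis unfolding adm_mono_def by blast
qed

text \<open>The zero subobject is the kernel of the identity, an admissible epic.\<close>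

lemma zero_adm_subobject:
  assumes B: "B \<in> ob C"
  obtains K k where "is_zero_obj C K" "k \<in> hom C K B" "adm_mono C k"
proof -
  obtain k where kd: "(k, idt C B) \<in> ex C"
    using adm_epi_id[OF B] by (auto simp: adm_epi_def)
  have ker: "is_kernel C k (idt C B)" using conflation_kernel_cokernel[OF kd] by simp
  have idB: "idt C B \<in> hom C B B" using id_in_hom B by simp
  define K where "K = src C k"
  have k: "k \<in> hom C K B" using ker idB unfolding is_kernel_def K_def by (auto simp: in_hom_iff)
  have K: "K \<in> ob C" using hom_ob k by simp
  have "cmp C (idt C B) k = mzero C K B"
    using ker idB unfolding is_kernel_def K_def by (auto simp: in_hom_iff)
  then have k0: "k = mzero C K B" using comp_id_left[OF k] by simp
  have "\<exists>!g. g \<in> hom C K K \<and> cmp C k g = mzero C K B"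
    using ker K zero_in_hom[OF K B] comp_id_left[OF zero_in_hom[OF K B]] idB
    unfolding is_kernel_def K_def by (auto simp: in_hom_iff)
  moreover have "cmp C k (idt C K) = mzero C K B" "cmp C k (mzero C K K) = mzero C K B"
    using comp_id_right[OF k] comp_zero[OF k K] k0 by auto
  ultimately have "idt C K = mzero C K K"
    using id_in_hom[OF K] zero_in_hom[OF K K] by blast
  then show ?thesis
    using that zero_objI K k kd unfolding adm_mono_def by blast
qed

text \<open>The pushout of \<open>0 \<rightarrow> B\<close> along \<open>0 \<rightarrow> A\<close> is a biproduct of \<open>A\<close> and \<open>B\<close>, so the first
  injection of any biproduct is, up to isomorphism, the admissible monic given by the axiom.\<close>

lemma biproduct_inj1_adm_mono:
  assumes bp: "is_biproduct C A B S i1 i2 p1 p2"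
  shows "adm_mono C i1"
proof -
  note b = biproductD[OF bp]
  obtain K k where K: "is_zero_obj C K" and k: "k \<in> hom C K B" and k_adm: "adm_mono C k"
    using zero_adm_subobject b(2) by blast
  have f: "mzero C K A \<in> hom C K A" using zero_in_hom zero_obj_ob[OF K] b(1) by simp
  then have "mzero C K A \<in> hom C (src C k) A" using k by (simp add: in_hom_iff)
  then obtain i' f' where po: "is_pushout C k (mzero C K A) i' f'" and i'_adm: "adm_mono C i'"
    using adm_mono_pushout_ex[OF k_adm] by blast
  obtain P where i': "i' \<in> hom C A P" and f': "f' \<in> hom C B P"
    and sq: "cmp C f' k = cmp C i' (mzero C K A)"
    and univ: "\<And>T g h. T \<in> ob C \<Longrightarrow> g \<in> hom C A T \<Longrightarrow> h \<in> hom C B T \<Longrightarrow>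
       cmp C h k = cmp C g (mzero C K A) \<Longrightarrow> \<exists>!u. u \<in> hom C P T \<and> cmp C u i' = g \<and> cmp C u f' = h"
    using pushoutE[OF po k f] by blast
  have P: "P \<in> ob C" using hom_ob i' by simp
  have "cmp C i2 k = cmp C i1 (mzero C K A)"
    using zero_obj_hom_from_unique[OF K comp_in_hom[OF k b(5)] comp_in_hom[OF f b(4)]] .
  then obtain \<phi> where \<phi>: "\<phi> \<in> hom C P S" "cmp C \<phi> i' = i1" "cmp C \<phi> f' = i2"
    using univ[OF b(3) b(4) b(5)] by blast
  define \<psi> where "\<psi> = madd C (cmp C i' p1) (cmp C f' p2)"
  have \<psi>: "\<psi> \<in> hom C S P" unfolding \<psi>_def using add_in_hom comp_in_hom b i' f' by meson
  have \<phi>\<psi>: "cmp C \<phi> \<psi> = idt C S"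
    using comp_biproduct_copair[OF bp i' f' \<phi>(1)] \<phi> b unfolding \<psi>_def by simp
  have "cmp C (cmp C \<psi> \<phi>) i' = i'" "cmp C (cmp C \<psi> \<phi>) f' = f'"
    using comp_assoc[OF i' \<phi>(1) \<psi>] comp_assoc[OF f' \<phi>(1) \<psi>] \<phi>
      biproduct_copair_comp_inj[OF bp i' f'] unfolding \<psi>_def by auto
  then have \<psi>\<phi>: "cmp C \<psi> \<phi> = idt C P"
    using univ[OF P i' f'] sq comp_in_hom[OF \<phi>(1) \<psi>] id_in_hom[OF P] comp_id_left i' f' by blast
  show ?thesis
    using adm_mono_comp_iso[OF i'_adm i' \<phi>(1) isoI[OF \<phi>(1) \<psi> \<psi>\<phi> \<phi>\<psi>]] \<phi> by simp
qed

end

section \<open>Length\<close>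

lemma successively_snoc:
  "successively R xs \<Longrightarrow> xs \<noteq> [] \<Longrightarrow> R (last xs) b \<Longrightarrow> successively R (xs @ [b])"
  by (simp add: successively_append_iff)

lemma successively_replace_last:
  assumes "successively R xs" "xs \<noteq> []" "\<And>z. R z (last xs) \<Longrightarrow> R z b"
  shows "successively R (butlast xs @ [b])"
proof -
  have "successively R (butlast xs @ [last xs])" using assms(1,2) by simp
  then show ?thesis using assms(3) by (auto simp: successively_append_iff)
qed

lemma length_chain_iff:
  "length_chain C X xs \<longleftrightarrow> xs \<noteq> [] \<and> set xs \<subseteq> ob C \<and> is_zero_obj C (hd xs) \<and> last xs = X \<and>
     successively (adm_psub C) xs"
  unfolding length_chain_def successively_conv_nth ..

lemma length_chain_le_E_length: "length_chain C X xs \<Longrightarrow> enat (length xs - 1) \<le> E_length C X"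
  unfolding E_length_def by (rule SUP_upper) simp

context exact_cat
begin

lemma length_chain_ex:
  assumes X: "X \<in> ob C"
  obtains xs where "length_chain C X xs"
proof (cases "is_zero_obj C X")
  case True
  then show ?thesis using that[of "[X]"] X by (simp add: length_chain_iff)
next
  case False
  obtain K k where K: "is_zero_obj C K" and k: "k \<in> hom C K X" "adm_mono C k"
    using zero_adm_subobject X by blast
  then have "adm_psub C K X"
    using zero_obj_iso False unfolding adm_psub_def by blast
  then show ?thesis using that[of "[K, X]"] X K zero_obj_ob[OF K] by (simp add: length_chain_iff)
qed

lemma adm_sub_refl: "X \<in> ob C \<Longrightarrow> adm_sub C X X"
  using id_in_hom adm_mono_id unfolding adm_sub_def by blast

lemma adm_sub_trans:
  assumes "adm_sub C A B" "adm_sub C B D"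
  shows "adm_sub C A D"
  using assms adm_mono_comp comp_in_hom unfolding adm_sub_def by meson

lemma adm_psub_ob: "adm_psub C A B \<Longrightarrow> A \<in> ob C \<and> B \<in> ob C"
  using hom_ob unfolding adm_psub_def by blast

lemma biproduct_summand_adm_psub:
  assumes "is_biproduct C A B S i1 i2 p1 p2" "\<not> is_zero_obj C B"
  shows "adm_psub C A S"
  using biproductD(4)[OF assms(1)] biproduct_inj1_adm_mono[OF assms(1)] biproduct_inj1_not_iso[OF assms]
  unfolding adm_psub_def by blast

lemma adm_psub_imp_adm_sub: "adm_psub C A B \<Longrightarrow> adm_sub C A B"
  unfolding adm_psub_def adm_sub_def by blast

lemma adm_psub_iso_trans:
  assumes p: "adm_psub C Z A" and i: "i \<in> hom C A B" "is_iso C i"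
  shows "adm_psub C Z B"
proof -
  obtain j where j: "j \<in> hom C Z A" "adm_mono C j" "\<not> is_iso C j"
    using p unfolding adm_psub_def by blast
  have "adm_mono C (cmp C i j)" using adm_mono_comp_iso j i by blast
  moreover have "\<not> is_iso C (cmp C i j)" using iso_cancel_left[OF i j(1)] j(3) by blast
  ultimately show ?thesis using comp_in_hom[OF j(1) i(1)] unfolding adm_psub_def by blast
qed

end

locale finite_exact_cat = exact_cat +
  assumes finite: "finite_exact C"
begin

lemma E_length_attained:
  assumes X: "X \<in> ob C"
  obtains xs where "length_chain C X xs" "E_length C X = enat (length xs - 1)"
proof -
  define S where "S = (\<lambda>xs. enat (length xs - 1)) ` {xs. length_chain C X xs}"
  have "S \<noteq> {}" using length_chain_ex X S_def by blast
  moreover have "E_length C X = Sup S" unfolding E_length_def S_def ..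
  moreover have "E_length C X < \<infinity>" using finite X by (simp add: finite_exact_def)
  ultimately have "finite S" "E_length C X = Max S"
    unfolding Sup_enat_def by (auto split: if_splits)
  then have "E_length C X \<in> S" using \<open>S \<noteq> {}\<close> by simp
  then show ?thesis using that S_def by blast
qed

definition elen where
  "elen X = the_enat (E_length C X)"

lemma E_length_elen: "X \<in> ob C \<Longrightarrow> E_length C X = enat (elen X)"
  unfolding elen_def by (metis E_length_attained the_enat.simps)

lemma elen_less:
  assumes p: "adm_psub C A B"
  shows "elen A < elen B"
proof -
  have ob: "A \<in> ob C" "B \<in> ob C" using adm_psub_ob p by auto
  obtain xs where xs: "length_chain C A xs" "E_length C A = enat (length xs - 1)"
    using E_length_attained ob(1) by blast
  have "length_chain C B (xs @ [B])"
    using xs(1) p ob(2) successively_snoc[of "adm_psub C" xs] by (auto simp: length_chain_iff)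
  then have "enat (length xs) \<le> E_length C B"
    using length_chain_le_E_length by fastforce
  then have "length xs \<le> elen B" using E_length_elen[OF ob(2)] by simp
  moreover have "elen A = length xs - 1" using xs(2) E_length_elen[OF ob(1)] by simp
  moreover have "length xs > 0" using xs(1) by (simp add: length_chain_iff)
  ultimately show ?thesis by linarith
qed

lemma elen_iso_le:
  assumes i: "i \<in> hom C A B" "is_iso C i"
  shows "elen A \<le> elen B"
proof -
  have ob: "A \<in> ob C" "B \<in> ob C" using hom_ob i by auto
  obtain xs where xs: "length_chain C A xs" "E_length C A = enat (length xs - 1)"
    using E_length_attained ob(1) by blast
  have ne: "xs \<noteq> []" and A: "last xs = A" and zero: "is_zero_obj C (hd xs)"
    using xs(1) by (auto simp: length_chain_iff)
  have "hd (butlast xs @ [B]) = hd xs \<or> (xs = [A] \<and> hd (butlast xs @ [B]) = B)"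
    using ne A by (cases xs rule: rev_cases) (auto simp: hd_append)
  then have "is_zero_obj C (hd (butlast xs @ [B]))"
    using zero zero_obj_iso i by auto
  then have "length_chain C B (butlast xs @ [B])"
    using xs(1) ne A ob(2) successively_replace_last[of "adm_psub C" xs] adm_psub_iso_trans[OF _ i]
    by (auto simp: length_chain_iff dest: in_set_butlastD)
  then have "enat (length xs - 1) \<le> E_length C B"
    using length_chain_le_E_length by fastforce
  then show ?thesis using xs(2) E_length_elen ob by simp
qed

lemma elen_iso_eq:
  assumes i: "i \<in> hom C A B" "is_iso C i"
  shows "elen A = elen B"
proof -
  obtain g where g: "g \<in> hom C B A" "cmp C g i = idt C A" "cmp C i g = idt C B"
    using isoE[OF i(2,1)] by blast
  then have "elen B \<le> elen A" using elen_iso_le isoI[OF g(1) i(1) g(3,2)] by blast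
  then show ?thesis using elen_iso_le[OF i] by simp
qed

lemma elen_mono: "adm_sub C A B \<Longrightarrow> elen A \<le> elen B"
  using elen_less elen_iso_le unfolding adm_sub_def adm_psub_def by (meson less_imp_le)

end

section \<open>Chains of indecomposables\<close>

lemma sorted_wrt_less_le_last:
  fixes ys :: "'a::linorder list"
  shows "sorted_wrt (<) ys \<Longrightarrow> y \<in> set ys \<Longrightarrow> y \<le> last ys"
proof (induction ys)
  case (Cons a ys)
  then show ?case by (cases "ys = []") (auto intro: less_imp_le)
qed simp

lemma sorted_wrt_less_length_le:
  fixes ys :: "nat list"
  assumes "sorted_wrt (<) ys"
  shows "length ys \<le> Suc (last ys)"
proof -
  have "length ys = card (set ys)"
    using assms by (simp add: strict_sorted_iff distinct_card)
  also have "\<dots> \<le> card {..last ys}"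
    using sorted_wrt_less_le_last[OF assms] by (intro card_mono) auto
  finally show ?thesis by simp
qed

lemma finite_bounded_nat_lists: "finite {t. set t \<subseteq> {..n} \<and> length t \<le> Suc n}"
  by (rule finite_lists_length_le) simp

context finite_exact_cat
begin

definition ind_chain where
  "ind_chain X xs \<longleftrightarrow> xs \<noteq> [] \<and> last xs = X \<and> (\<forall>Y \<in> set xs. indecomposable C Y) \<and>
     successively (adm_psub C) xs"

definition mu_candidates where
  "mu_candidates X = map elen ` {xs. ind_chain X xs}"

lemma mu_ind_eq_lll_max: "mu_ind C X = lll_max (mu_candidates X)"
  unfolding mu_ind_def mu_candidates_def ind_chain_def elen_def successively_conv_nth
  by (simp add: setcompr_eq_image)

lemma ind_chain_elen_sorted:
  assumes "ind_chain X xs"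
  shows "sorted_wrt (<) (map elen xs)"
proof -
  have "successively (adm_psub C) xs" using assms unfolding ind_chain_def by blast
  then have "successively (\<lambda>Y Z. elen Y < elen Z) xs" by (rule successively_mono) (rule elen_less)
  then show ?thesis by (simp add: successively_map successively_conv_sorted_wrt[symmetric])
qed

lemma mu_candidates_bounded:
  assumes "t \<in> mu_candidates X"
  shows "set t \<subseteq> {..elen X}" "length t \<le> Suc (elen X)"
proof -
  obtain xs where xs: "ind_chain X xs" "t = map elen xs"
    using assms unfolding mu_candidates_def by blast
  then have last: "last t = elen X" by (simp add: ind_chain_def last_map)
  have sorted: "sorted_wrt (<) t" using ind_chain_elen_sorted xs by simp
  show "set t \<subseteq> {..elen X}" using sorted_wrt_less_le_last[OF sorted] last by auto
  show "length t \<le> Suc (elen X)" using sorted_wrt_less_length_le[OF sorted] last by simp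
qed

lemma mu_ind_greatest:
  assumes "indecomposable C X"
  shows "mu_ind C X \<in> mu_candidates X" "\<forall>t \<in> mu_candidates X. lll t (mu_ind C X)"
proof -
  have "mu_candidates X \<subseteq> {t. set t \<subseteq> {..elen X} \<and> length t \<le> Suc (elen X)}"
    using mu_candidates_bounded by blast
  then have "finite (mu_candidates X)"
    using finite_bounded_nat_lists finite_subset by blast
  moreover have "[elen X] \<in> mu_candidates X"
    using assms unfolding mu_candidates_def ind_chain_def by (auto intro: image_eqI[of _ _ "[X]"])
  ultimately show "mu_ind C X \<in> mu_candidates X" "\<forall>t \<in> mu_candidates X. lll t (mu_ind C X)"
    using lll_max_greatest unfolding mu_ind_eq_lll_max by blast+
qed

lemma ind_chain_extend:
  assumes xs: "ind_chain X' xs" and X: "indecomposable C X" and sub: "adm_sub C X' X"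
  obtains ys where "ind_chain X ys" "lll (map elen xs) (map elen ys)"
proof -
  have ne: "xs \<noteq> []" and last: "last xs = X'" and chain: "successively (adm_psub C) xs"
    using xs unfolding ind_chain_def by auto
  obtain i where i: "i \<in> hom C X' X" "adm_mono C i" using sub unfolding adm_sub_def by blast
  show ?thesis
  proof (cases "is_iso C i")
    case False
    then have "adm_psub C (last xs) X" using i last unfolding adm_psub_def by blast
    then have "ind_chain X (xs @ [X])"
      using xs X successively_snoc[OF chain ne] unfolding ind_chain_def by auto
    then show ?thesis using that lll_append by fastforce
  next
    case True
    have "successively (adm_psub C) (butlast xs @ [X])"
      using successively_replace_last[OF chain ne] adm_psub_iso_trans[OF _ i(1) True] last by blast
    then have "ind_chain X (butlast xs @ [X])"
      using xs X unfolding ind_chain_def by (auto dest: in_set_butlastD)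
    moreover have "map elen (butlast xs @ [X]) = map elen (butlast xs @ [last xs])"
      using elen_iso_eq[OF i(1) True] last by simp
    ultimately show ?thesis using that lll_refl ne by fastforce
  qed
qed

lemma mu_ind_mono:
  assumes X': "indecomposable C X'" and X: "indecomposable C X" and sub: "adm_sub C X' X"
  shows "lll (mu_ind C X') (mu_ind C X)"
proof -
  obtain xs where xs: "ind_chain X' xs" "mu_ind C X' = map elen xs"
    using mu_ind_greatest(1)[OF X'] unfolding mu_candidates_def by blast
  obtain ys where ys: "ind_chain X ys" "lll (map elen xs) (map elen ys)"
    using ind_chain_extend[OF xs(1) X sub] .
  have "map elen ys \<in> mu_candidates X" using ys(1) unfolding mu_candidates_def by blast
  then have "lll (map elen ys) (mu_ind C X)" using mu_ind_greatest(2)[OF X] by blast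
  then show ?thesis using lll_trans[OF ys(2)] xs(2) by simp
qed

lemma finite_mu_ind_below:
  assumes Y: "Y \<in> ob C"
  shows "finite {mu_ind C X' | X'. indecomposable C X' \<and> adm_sub C X' Y}"
proof (rule finite_subset[OF subsetI finite_bounded_nat_lists[of "elen Y"]])
  fix t assume "t \<in> {mu_ind C X' | X'. indecomposable C X' \<and> adm_sub C X' Y}"
  then obtain X' where X': "indecomposable C X'" "adm_sub C X' Y" "t = mu_ind C X'" by blast
  then have "elen X' \<le> elen Y" using elen_mono by blast
  then show "t \<in> {t. set t \<subseteq> {..elen Y} \<and> length t \<le> Suc (elen Y)}"
    using mu_candidates_bounded[OF mu_ind_greatest(1)[OF X'(1)]] X'(3) by auto
qed

text \<open>A nontrivial biproduct decomposition of a nonzero admissible subobject yields a proper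
  admissible subobject, of smaller length.\<close>

lemma indecomposable_adm_subobject_ex:
  assumes X: "X \<in> ob C" "\<not> is_zero_obj C X"
  obtains X' where "indecomposable C X'" "adm_sub C X' X"
proof -
  define P where "P Y \<longleftrightarrow> Y \<in> ob C \<and> \<not> is_zero_obj C Y \<and> adm_sub C Y X" for Y
  have "P X" using X adm_sub_refl unfolding P_def by blast
  then obtain X' where X': "P X'" and min: "\<And>Y. P Y \<Longrightarrow> elen X' \<le> elen Y"
    using ex_has_least_nat[of P X elen] by blast
  have "indecomposable C X'"
    unfolding indecomposable_def
  proof (intro conjI allI impI)
    show "X' \<in> ob C" "\<not> is_zero_obj C X'" using X' unfolding P_def by auto
    fix A B i1 i2 p1 p2 assume bp: "is_biproduct C A B X' i1 i2 p1 p2"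
    show "is_zero_obj C A \<or> is_zero_obj C B"
    proof (rule ccontr)
      assume "\<not> (is_zero_obj C A \<or> is_zero_obj C B)"
      then have psub: "adm_psub C A X'" and A: "\<not> is_zero_obj C A"
        using biproduct_summand_adm_psub[OF bp] by auto
      then have "P A"
        using X' adm_sub_trans adm_psub_imp_adm_sub adm_psub_ob unfolding P_def by blast
      then show False using elen_less[OF psub] min by fastforce
    qed
  qed
  then show ?thesis using that X' unfolding P_def by blast
qed

end

theorem proposition7p16:
  fixes C :: "('o, 'm) excat"
  assumes "exact_category C" and "finite_exact C"
  shows "(\<forall>X. indecomposable C X \<longrightarrow> mu_ext C X = mu_ind C X) \<and>
         (\<forall>X \<in> ob C. \<forall>Y \<in> ob C. \<not> is_zero_obj C X \<longrightarrow> \<not> is_zero_obj C Y \<longrightarrow>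
            adm_sub C X Y \<longrightarrow> lll (mu_ext C X) (mu_ext C Y))"
proof -
  interpret finite_exact_cat C
    using assms by unfold_locales
  let ?below = "\<lambda>X. {mu_ind C X' | X'. indecomposable C X' \<and> adm_sub C X' X}"
  have "mu_ext C X = mu_ind C X" if X: "indecomposable C X" for X
    unfolding mu_ext_def
  proof (rule lll_max_eqI)
    show "mu_ind C X \<in> ?below X"
      using X adm_sub_refl by (auto simp: indecomposable_def)
    show "\<forall>t \<in> ?below X. lll t (mu_ind C X)"
      using mu_ind_mono X by blast
  qed
  moreover have "lll (mu_ext C X) (mu_ext C Y)"
    if X: "X \<in> ob C" "\<not> is_zero_obj C X" and Y: "Y \<in> ob C" and sub: "adm_sub C X Y" for X Y
  proof -
    obtain X' where "indecomposable C X'" "adm_sub C X' X"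
      using indecomposable_adm_subobject_ex[OF X] by blast
    then have "?below X \<noteq> {}" by blast
    moreover have "?below X \<subseteq> ?below Y"
      using adm_sub_trans[OF _ sub] by blast
    ultimately show ?thesis
      unfolding mu_ext_def by (rule lll_max_mono[OF finite_mu_ind_below[OF Y]])
  qed
  ultimately show ?thesis by blast
qed

end
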